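(* For parameters $a>0$, $b>0$, $L>0$, call a barrier a pair $(\phi,\psi)$ solving $$-\phi''=\phi(1-\phi-a\psi),\quad -\psi''=\psi(1-b\phi-\psi)\ \text{ in }(0,L),\qquad \phi(0)=\phi(L)=0,\ \psi(0)=\psi(L)=1,$$ with $0<\phi(x)<1$ and $0<\psi(x)<1$ for all $x\in(0,L)$. Suppose a barrier exists for the parameters $\bar a,\bar b,\bar L$ (with $\bar a>0$, $\bar b>\max\{\bar a,1\}$, $\bar L>0$). Then: 1. for all $L\ge\bar L$ a barrier exists for the parameters $\bar a,\bar b,L$; 2. for all $b\ge\bar b$ a barrier exists for the parameters $\bar a,b,\bar L$; 3. for all $a\le\bar a$ (with $a>0$) a barrier exists for the parameters $a,\bar b,\bar L$. *)

theory Defs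
  imports "HOL-Analysis.Analysis"
begin

definition barrier :: "real \<Rightarrow> real \<Rightarrow> real \<Rightarrow> (real \<Rightarrow> real) \<Rightarrow> (real \<Rightarrow> real) \<Rightarrow> bool" where
  "barrier a b L \<phi> \<psi> \<longleftrightarrow>
     continuous_on {0..L} \<phi> \<and> continuous_on {0..L} \<psi> \<and>
     (\<exists>\<phi>' \<psi>' \<phi>'' \<psi>''.
        (\<forall>x\<in>{0<..<L}.
           (\<phi> has_real_derivative \<phi>' x) (at x) \<and>
           (\<psi> has_real_derivative \<psi>' x) (at x) \<and>
           (\<phi>' has_real_derivative \<phi>'' x) (at x) \<and>
           (\<psi>' has_real_derivative \<psi>'' x) (at x) \<and>
           - \<phi>'' x = \<phi> x * (1 - \<phi> x - a * \<psi> x) \<and>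
           - \<psi>'' x = \<psi> x * (1 - b * \<phi> x - \<psi> x))) \<and>
     \<phi> 0 = 0 \<and> \<phi> L = 0 \<and> \<psi> 0 = 1 \<and> \<psi> L = 1 \<and>
     (\<forall>x\<in>{0<..<L}. 0 < \<phi> x \<and> \<phi> x < 1 \<and> 0 < \<psi> x \<and> \<psi> x < 1)"

definition barrier_exists :: "real \<Rightarrow> real \<Rightarrow> real \<Rightarrow> bool" where
  "barrier_exists a b L \<longleftrightarrow> (\<exists>\<phi> \<psi>. barrier a b L \<phi> \<psi>)"

end

theory Submission
  imports Defs
begin

text \<open>
  For the order in which \<phi> increases and \<psi> decreases the competition system is monotone:
  after adding k^2 u to both sides of each equation -u'' = f(u), with k large, each right-hand
  side is increasing in its own unknown and decreasing in the other one. A barrier for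
  (a0, b0, L0), extended by its boundary values (0, 1) beyond L0, is therefore a
  sub-solution for every (a, b, L) with a \<le> a0, b \<ge> b0 and L \<ge> L0, and the minimum
  principle places it below one step of the iteration defined by the Green operator of
  -u'' + k^2 u. The iterates are then monotone, and by dominated convergence their limit solves the
  system. It lies above the sub-solution, so \<phi> is positive somewhere, and strict positivity of
  the Green operator gives 0 < \<phi> < 1 and 0 < \<psi> < 1.
\<close>

section \<open>Second derivatives and the minimum principle\<close>

definition has_second_derivative_on :: "(real \<Rightarrow> real) \<Rightarrow> (real \<Rightarrow> real) \<Rightarrow> real set \<Rightarrow> bool" where
  "has_second_derivative_on w w'' S \<longleftrightarrow>
     (\<exists>w'. \<forall>x\<in>S. (w has_real_derivative w' x) (at x) \<and> (w' has_real_derivative w'' x) (at x))"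

lemma has_second_derivative_on_subset:
  "has_second_derivative_on w w'' S \<Longrightarrow> T \<subseteq> S \<Longrightarrow> has_second_derivative_on w w'' T"
  unfolding has_second_derivative_on_def by blast

lemma has_second_derivative_on_cong:
  "has_second_derivative_on w v'' S \<Longrightarrow> (\<And>x. x \<in> S \<Longrightarrow> v'' x = w'' x) \<Longrightarrow> has_second_derivative_on w w'' S"
  unfolding has_second_derivative_on_def by auto

lemma has_second_derivative_on_const: "has_second_derivative_on (\<lambda>_. c) (\<lambda>_. 0) S"
  unfolding has_second_derivative_on_def by (intro exI[of _ "\<lambda>_. 0"]) auto

lemma has_second_derivative_on_diff:
  assumes "has_second_derivative_on v v'' S" "has_second_derivative_on w w'' S"
  shows "has_second_derivative_on (\<lambda>x. v x - w x) (\<lambda>x. v'' x - w'' x) S"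
proof -
  obtain v' w' where "\<forall>x\<in>S. (v has_real_derivative v' x) (at x) \<and> (v' has_real_derivative v'' x) (at x)"
    "\<forall>x\<in>S. (w has_real_derivative w' x) (at x) \<and> (w' has_real_derivative w'' x) (at x)"
    using assms unfolding has_second_derivative_on_def by blast
  then show ?thesis
    unfolding has_second_derivative_on_def by (intro exI[of _ "\<lambda>x. v' x - w' x"]) (auto intro!: DERIV_diff)
qed

lemma has_second_derivative_on_transform:
  assumes "has_second_derivative_on v w'' S" "open S" "\<And>x. x \<in> S \<Longrightarrow> v x = w x"
  shows "has_second_derivative_on w w'' S"
proof -
  obtain w' where "\<forall>x\<in>S. (v has_real_derivative w' x) (at x) \<and> (w' has_real_derivative w'' x) (at x)"
    using assms(1) unfolding has_second_derivative_on_def by blast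
  then show ?thesis
    unfolding has_second_derivative_on_def using assms(2,3)
    by (intro exI[of _ w']) (metis has_field_derivative_transform_within_open)
qed

lemma minimum_principle:
  assumes cont: "continuous_on {\<alpha>..\<beta>} w" and "K > 0"
    and deriv: "has_second_derivative_on w w'' {\<alpha><..<\<beta>}"
    and super: "\<And>x. x \<in> {\<alpha><..<\<beta>} \<Longrightarrow> w'' x \<le> K * w x"
    and "w \<alpha> \<ge> 0" "w \<beta> \<ge> 0" "x \<in> {\<alpha>..\<beta>}"
  shows "w x \<ge> 0"
proof (rule ccontr)
  assume "\<not> w x \<ge> 0"
  obtain x0 where x0: "x0 \<in> {\<alpha>..\<beta>}" "\<And>y. y \<in> {\<alpha>..\<beta>} \<Longrightarrow> w x0 \<le> w y"
    using continuous_attains_inf[OF _ _ cont] \<open>x \<in> {\<alpha>..\<beta>}\<close> by auto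
  have neg: "w x0 < 0" using x0(2)[OF \<open>x \<in> {\<alpha>..\<beta>}\<close>] \<open>\<not> w x \<ge> 0\<close> by simp
  with x0(1) \<open>w \<alpha> \<ge> 0\<close> \<open>w \<beta> \<ge> 0\<close> have inner: "x0 \<in> {\<alpha><..<\<beta>}"
    by (cases "x0 = \<alpha> \<or> x0 = \<beta>") auto
  obtain w' where w': "\<And>y. y \<in> {\<alpha><..<\<beta>} \<Longrightarrow> (w has_real_derivative w' y) (at y)"
    and w'': "(w' has_real_derivative w'' x0) (at x0)"
    using deriv inner unfolding has_second_derivative_on_def by blast
  define d where "d = min (x0 - \<alpha>) (\<beta> - x0)"
  have "d > 0" using inner by (auto simp: d_def)
  have near: "y \<in> {\<alpha><..<\<beta>}" if "\<bar>x0 - y\<bar> < d" for y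
    using that by (auto simp: d_def abs_if split: if_splits)
  have "w' x0 = 0"
    using DERIV_local_min[OF w'[OF inner] \<open>d > 0\<close>] near x0(2) by force
  have "w'' x0 < 0" using super[OF inner] neg \<open>K > 0\<close> by (smt (verit) mult_pos_neg)
  \<comment> \<open>so w' is positive just left of x0: w increases into its minimum, a contradiction\<close>
  then obtain e where "e > 0" and e: "\<And>h. 0 < h \<Longrightarrow> h < e \<Longrightarrow> w' x0 < w' (x0 - h)"
    using DERIV_neg_dec_left[OF w''] by blast
  define h where "h = min e d / 2"
  have h: "0 < h" "h < e" "h < d" using \<open>e > 0\<close> \<open>d > 0\<close> by (auto simp: h_def)
  obtain z where z: "x0 - h < z" "z < x0" "w x0 - w (x0 - h) = h * w' z"
    using MVT2[of "x0 - h" x0 w w'] w' near h by (force simp: abs_if)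
  have "w' z > 0" using e[of "x0 - z"] z h \<open>w' x0 = 0\<close> by simp
  then have "w (x0 - h) < w x0" using z h by (smt (verit) mult_pos_pos)
  moreover have "x0 - h \<in> {\<alpha>..\<beta>}" using near[of "x0 - h"] h by auto
  ultimately show False using x0(2) by fastforce
qed

section \<open>The Green operator of -u'' + k^2 u\<close>

lemma sinh_split: "sinh (k * L :: real) = sinh (k * x) * cosh (k * (L - x)) + cosh (k * x) * sinh (k * (L - x))"
  using sinh_add[of "k * x" "k * (L - x)"] by (simp add: algebra_simps)

text \<open>The solution u of -u'' + k^2 u = g, u 0 = 0, u L = 0 (for k > 0 and L > 0).\<close>

definition green_op :: "real \<Rightarrow> real \<Rightarrow> (real \<Rightarrow> real) \<Rightarrow> real \<Rightarrow> real" where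
  "green_op k L g x =
     (sinh (k * (L - x)) * integral {0..x} (\<lambda>s. sinh (k * s) * g s)
      + sinh (k * x) * integral {x..L} (\<lambda>s. sinh (k * (L - s)) * g s)) / (k * sinh (k * L))"

lemma green_op_0 [simp]: "green_op k L g 0 = 0"
  and green_op_L [simp]: "green_op k L g L = 0"
  by (simp_all add: green_op_def)

lemma has_second_derivative_on_green_op:
  assumes g: "continuous_on {0..L} g" and "k \<noteq> 0"
  shows "has_second_derivative_on (green_op k L g) (\<lambda>x. k\<^sup>2 * green_op k L g x - g x) {0<..<L}"
proof -
  define A where "A x = integral {0..x} (\<lambda>s. sinh (k * s) * g s)" for x
  define B where "B x = integral {x..L} (\<lambda>s. sinh (k * (L - s)) * g s)" for x
  define N where "N x = sinh (k * (L - x)) * A x + sinh (k * x) * B x" for x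
  define M where "M x = cosh (k * x) * B x - cosh (k * (L - x)) * A x" for x
  have green: "green_op k L g = (\<lambda>x. N x / (k * sinh (k * L)))"
    unfolding green_op_def N_def A_def B_def by auto
  have "(green_op k L g has_real_derivative M x / sinh (k * L)) (at x)
      \<and> ((\<lambda>x. M x / sinh (k * L)) has_real_derivative k\<^sup>2 * green_op k L g x - g x) (at x)"
    if x: "x \<in> {0<..<L}" for x
  proof -
    have at_x: "at x within {0..L} = at x" using x by (intro at_within_interior) auto
    have "continuous_on {0..L} (\<lambda>s. sinh (k * s) * g s)" "continuous_on {0..L} (\<lambda>s. sinh (k * (L - s)) * g s)"
      by (intro continuous_intros g)+
    from integral_has_real_derivative[OF this(1), of x] integral_has_real_derivative'[OF this(2), of x] x
    have A: "(A has_real_derivative sinh (k * x) * g x) (at x)"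
      and B: "(B has_real_derivative - (sinh (k * (L - x)) * g x)) (at x)"
      unfolding A_def[abs_def] B_def[abs_def] at_x by auto
    have N: "(N has_real_derivative k * M x) (at x)"
      unfolding N_def[abs_def] M_def
      by (rule DERIV_cong, (rule derivative_eq_intros A B refl)+) (simp add: algebra_simps)
    have M: "(M has_real_derivative k * N x - sinh (k * L) * g x) (at x)"
      unfolding M_def[abs_def] N_def sinh_split[of k L x]
      by (rule DERIV_cong, (rule derivative_eq_intros A B refl)+) (simp add: algebra_simps)
    have "sinh (k * L) \<noteq> 0" using x \<open>k \<noteq> 0\<close> by simp
    then show ?thesis
      using DERIV_cdivide[OF N, of "k * sinh (k * L)"] DERIV_cdivide[OF M, of "sinh (k * L)"] \<open>k \<noteq> 0\<close>
      unfolding green by (simp add: field_simps power2_eq_square)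
  qed
  then show ?thesis
    unfolding has_second_derivative_on_def by (intro exI[of _ "\<lambda>x. M x / sinh (k * L)"]) auto
qed

lemma green_op_mono:
  assumes "k > 0" and g: "continuous_on {0..L} g" and h: "continuous_on {0..L} h"
    and le: "\<And>s. s \<in> {0..L} \<Longrightarrow> g s \<le> h s" and x: "x \<in> {0..L}"
  shows "green_op k L g x \<le> green_op k L h x"
proof -
  have int: "(\<lambda>s. sinh (k * s) * f s) integrable_on {0..x}"
    "(\<lambda>s. sinh (k * (L - s)) * f s) integrable_on {x..L}" if "continuous_on {0..L} f" for f
    using that x by (auto intro!: integrable_continuous_real continuous_intros elim!: continuous_on_subset)
  have "integral {0..x} (\<lambda>s. sinh (k * s) * g s) \<le> integral {0..x} (\<lambda>s. sinh (k * s) * h s)"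
    using int[OF g] int[OF h] le x \<open>k > 0\<close> by (intro integral_le) (auto intro!: mult_left_mono)
  moreover have "integral {x..L} (\<lambda>s. sinh (k * (L - s)) * g s) \<le> integral {x..L} (\<lambda>s. sinh (k * (L - s)) * h s)"
    using int[OF g] int[OF h] le x \<open>k > 0\<close> by (intro integral_le) (auto intro!: mult_left_mono)
  ultimately show ?thesis
    unfolding green_op_def using x \<open>k > 0\<close>
    by (intro divide_right_mono add_mono mult_left_mono) auto
qed

lemma green_op_nonneg:
  assumes "k > 0" "continuous_on {0..L} g" "\<And>s. s \<in> {0..L} \<Longrightarrow> 0 \<le> g s" "x \<in> {0..L}"
  shows "0 \<le> green_op k L g x"
  using green_op_mono[of k L "\<lambda>_. 0" g x] assms by (simp add: green_op_def)

lemma green_op_const: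
  assumes "k > 0" "L > 0" "x \<in> {0..L}"
  shows "green_op k L (\<lambda>_. c) x = c / k\<^sup>2 * (1 - (sinh (k * x) + sinh (k * (L - x))) / sinh (k * L))"
proof -
  have i1: "((\<lambda>s. sinh (k * s) * c) has_integral (c * cosh (k * x) / k - c * cosh (k * 0) / k)) {0..x}"
    using assms by (intro fundamental_theorem_of_calculus)
      (auto simp: has_real_derivative_iff_has_vector_derivative[symmetric] intro!: derivative_eq_intros)
  have I1: "integral {0..x} (\<lambda>s. sinh (k * s) * c) = c * (cosh (k * x) - 1) / k"
    using integral_unique[OF i1] by (simp add: diff_divide_distrib right_diff_distrib)
  have i2: "((\<lambda>s. sinh (k * (L - s)) * c) has_integral
      (- c * cosh (k * (L - L)) / k - - c * cosh (k * (L - x)) / k)) {x..L}"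
    using assms by (intro fundamental_theorem_of_calculus)
      (auto simp: has_real_derivative_iff_has_vector_derivative[symmetric] intro!: derivative_eq_intros)
  have I2: "integral {x..L} (\<lambda>s. sinh (k * (L - s)) * c) = c * (cosh (k * (L - x)) - 1) / k"
    using integral_unique[OF i2] by (simp add: diff_divide_distrib right_diff_distrib)
  have num: "sinh (k * (L - x)) * (c * (cosh (k * x) - 1) / k) + sinh (k * x) * (c * (cosh (k * (L - x)) - 1) / k)
      = c / k * (sinh (k * L) - (sinh (k * x) + sinh (k * (L - x))))"
    using \<open>k > 0\<close> unfolding sinh_split[of k L x] by (simp add: field_simps)
  show ?thesis
    using assms unfolding green_op_def I1 I2 num by (simp add: field_simps power2_eq_square)
qed

lemma green_op_less_one:
  assumes "k > 0" "L > 0" "continuous_on {0..L} g" "\<And>s. s \<in> {0..L} \<Longrightarrow> g s \<le> k\<^sup>2"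
    and x: "x \<in> {0..L}"
  shows "green_op k L g x < 1"
proof -
  have "0 < (sinh (k * x) + sinh (k * (L - x))) / sinh (k * L)"
    using assms by (cases "x = 0") (auto intro!: divide_pos_pos add_nonneg_pos add_pos_nonneg)
  moreover have "green_op k L g x \<le> green_op k L (\<lambda>_. k\<^sup>2) x"
    using assms by (intro green_op_mono) auto
  ultimately show ?thesis
    using green_op_const[OF assms(1,2) x] \<open>k > 0\<close> by simp
qed

lemma integral_pos_continuous:
  fixes f :: "real \<Rightarrow> real"
  assumes "continuous_on {a..b} f" "a < b" "\<And>x. x \<in> {a..b} \<Longrightarrow> 0 \<le> f x" "s \<in> {a..b}" "f s > 0"
  shows "integral {a..b} f > 0"
  using integral_nonneg[of f "{a..b}"] integral_eq_0_iff[of a b f] integrable_continuous_real[of a b f] assms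
  by force

lemma green_op_pos:
  assumes "k > 0" and g: "continuous_on {0..L} g" and g_nonneg: "\<And>s. s \<in> {0..L} \<Longrightarrow> 0 \<le> g s"
    and s0: "s0 \<in> {0<..<L}" "g s0 > 0" and x: "x \<in> {0<..<L}"
  shows "green_op k L g x > 0"
proof -
  define I1 where "I1 = integral {0..x} (\<lambda>s. sinh (k * s) * g s)"
  define I2 where "I2 = integral {x..L} (\<lambda>s. sinh (k * (L - s)) * g s)"
  have cont: "continuous_on {0..x} (\<lambda>s. sinh (k * s) * g s)" "continuous_on {x..L} (\<lambda>s. sinh (k * (L - s)) * g s)"
    using x by (auto intro!: continuous_intros continuous_on_subset[OF g])
  have nonneg: "\<And>s. s \<in> {0..x} \<Longrightarrow> 0 \<le> sinh (k * s) * g s" "\<And>s. s \<in> {x..L} \<Longrightarrow> 0 \<le> sinh (k * (L - s)) * g s"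
    using x \<open>k > 0\<close> g_nonneg by auto
  have "I1 \<ge> 0" "I2 \<ge> 0"
    unfolding I1_def I2_def using nonneg cont
    by (auto intro!: integral_nonneg integrable_continuous_real)
  moreover have "I1 > 0 \<or> I2 > 0"
  proof (cases "s0 \<le> x")
    case True
    then show ?thesis unfolding I1_def
      using integral_pos_continuous[OF cont(1) _ nonneg(1), of s0] s0 x \<open>k > 0\<close> by auto
  next
    case False
    then show ?thesis unfolding I2_def
      using integral_pos_continuous[OF cont(2) _ nonneg(2), of s0] s0 x \<open>k > 0\<close> by auto
  qed
  moreover have "sinh (k * (L - x)) > 0" "sinh (k * x) > 0" "k * sinh (k * L) > 0"
    using x \<open>k > 0\<close> by auto
  ultimately have "sinh (k * (L - x)) * I1 + sinh (k * x) * I2 > 0"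
    by (smt (verit) mult_pos_pos mult_nonneg_nonneg)
  then show ?thesis
    unfolding green_op_def I1_def[symmetric] I2_def[symmetric] using \<open>k * sinh (k * L) > 0\<close> by simp
qed

lemma continuous_on_green_op_integrable:
  assumes "(\<lambda>s. sinh (k * s) * g s) integrable_on {0..L}"
    and "(\<lambda>s. sinh (k * (L - s)) * g s) integrable_on {0..L}"
  shows "continuous_on {0..L} (green_op k L g)"
  using indefinite_integral_continuous_1[OF assms(1)] indefinite_integral_continuous_1'[OF assms(2)]
  unfolding green_op_def[abs_def] divide_inverse by (intro continuous_intros)

lemma continuous_on_green_op: "continuous_on {0..L} g \<Longrightarrow> continuous_on {0..L} (green_op k L g)"
  by (intro continuous_on_green_op_integrable integrable_continuous_real continuous_intros)

lemma green_op_tendsto: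
  fixes g :: "nat \<Rightarrow> real \<Rightarrow> real"
  assumes cont: "\<And>n. continuous_on {0..L} (g n)" and bound: "\<And>n s. s \<in> {0..L} \<Longrightarrow> \<bar>g n s\<bar> \<le> M"
    and lim: "\<And>s. s \<in> {0..L} \<Longrightarrow> (\<lambda>n. g n s) \<longlonglongrightarrow> g_lim s"
  shows "continuous_on {0..L} (green_op k L g_lim)"
    and "\<And>x. x \<in> {0..L} \<Longrightarrow> (\<lambda>n. green_op k L (g n) x) \<longlonglongrightarrow> green_op k L g_lim x"
proof -
  have conv: "(\<lambda>s. \<kappa> s * g_lim s) integrable_on {a..b}
      \<and> (\<lambda>n. integral {a..b} (\<lambda>s. \<kappa> s * g n s)) \<longlonglongrightarrow> integral {a..b} (\<lambda>s. \<kappa> s * g_lim s)"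
    if \<kappa>: "continuous_on {a..b} \<kappa>" and sub: "{a..b} \<subseteq> {0..L}" for \<kappa> a b
  proof -
    have "(\<lambda>s. \<kappa> s * g n s) integrable_on {a..b}" for n
      by (intro integrable_continuous_real continuous_intros \<kappa> continuous_on_subset[OF cont sub])
    moreover have "(\<lambda>s. \<bar>\<kappa> s\<bar> * M) integrable_on {a..b}"
      by (intro integrable_continuous_real continuous_intros \<kappa>)
    moreover have "norm (\<kappa> s * g n s) \<le> \<bar>\<kappa> s\<bar> * M" if "s \<in> {a..b}" for n s
      unfolding real_norm_def abs_mult using bound[of s n] sub that by (intro mult_left_mono) auto
    moreover have "(\<lambda>n. \<kappa> s * g n s) \<longlonglongrightarrow> \<kappa> s * g_lim s" if "s \<in> {a..b}" for s
      using lim[of s] sub that by (intro tendsto_mult_left) auto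
    moreover note dominated_convergence[of "\<lambda>n s. \<kappa> s * g n s" "{a..b}" "\<lambda>s. \<bar>\<kappa> s\<bar> * M" "\<lambda>s. \<kappa> s * g_lim s"]
    ultimately show ?thesis by blast
  qed
  have sinh_cont: "continuous_on S (\<lambda>s. sinh (k * s))" "continuous_on S (\<lambda>s. sinh (k * (L - s)))" for S
    by (intro continuous_intros)+
  show "continuous_on {0..L} (green_op k L g_lim)"
    using conv[OF sinh_cont(1)] conv[OF sinh_cont(2)] by (intro continuous_on_green_op_integrable) auto
  show "(\<lambda>n. green_op k L (g n) x) \<longlonglongrightarrow> green_op k L g_lim x" if "x \<in> {0..L}" for x
    using conv[OF sinh_cont(1), of 0 x] conv[OF sinh_cont(2), of x L] that
    unfolding green_op_def divide_inverse by (auto intro!: tendsto_intros)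
qed

section \<open>Monotone iteration\<close>

text \<open>Shifting by K u with K \<ge> c + 1 makes the reaction increasing in u on [0, 1].\<close>

definition shifted_reaction :: "real \<Rightarrow> real \<Rightarrow> real \<Rightarrow> real \<Rightarrow> real" where
  "shifted_reaction c K u v = u * (1 - u - c * v) + K * u"

lemma shifted_reaction_mono:
  assumes "0 \<le> c" "c + 1 \<le> K" "0 \<le> u" "u \<le> u'" "u' \<le> 1" "0 \<le> v'" "v' \<le> v" "v \<le> 1"
  shows "shifted_reaction c K u v \<le> shifted_reaction c K u' v'"
proof -
  have "c * v' \<le> c" using assms by (simp add: mult_left_le)
  then have "0 \<le> (u' - u) * (1 + K - u' - u - c * v')" "0 \<le> c * u * (v - v')"
    using assms by simp_all
  moreover have "shifted_reaction c K u' v' - shifted_reaction c K u v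
      = (u' - u) * (1 + K - u' - u - c * v') + c * u * (v - v')"
    unfolding shifted_reaction_def by (simp add: algebra_simps)
  ultimately show ?thesis by linarith
qed

lemma shifted_reaction_bounds:
  assumes "0 \<le> c" "c + 1 \<le> K" "0 \<le> u" "u \<le> 1" "0 \<le> v" "v \<le> 1"
  shows "0 \<le> shifted_reaction c K u v" and "shifted_reaction c K u v \<le> K - c * v"
    and "0 < u \<Longrightarrow> 0 < shifted_reaction c K u v"
proof -
  have "c * v \<le> c" using assms by (simp add: mult_left_le)
  then have "0 < 1 + K - u - c * v" "0 \<le> (1 - u) * (K - u - c * v)"
    using assms by simp_all
  moreover have "shifted_reaction c K u v = u * (1 + K - u - c * v)"
    "K - c * v - shifted_reaction c K u v = (1 - u) * (K - u - c * v)"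
    unfolding shifted_reaction_def by (simp_all add: algebra_simps)
  ultimately show "0 \<le> shifted_reaction c K u v" "shifted_reaction c K u v \<le> K - c * v"
    "0 < u \<Longrightarrow> 0 < shifted_reaction c K u v"
    using \<open>0 \<le> u\<close> by simp_all
qed

lemma continuous_on_shifted_reaction [continuous_intros]:
  "continuous_on S p \<Longrightarrow> continuous_on S q \<Longrightarrow> continuous_on S (\<lambda>s. shifted_reaction c K (p s) (q s))"
  unfolding shifted_reaction_def by (intro continuous_intros)

definition step_phi :: "real \<Rightarrow> real \<Rightarrow> real \<Rightarrow> (real \<Rightarrow> real) \<Rightarrow> (real \<Rightarrow> real) \<Rightarrow> real \<Rightarrow> real" where
  "step_phi a k L p q = green_op k L (\<lambda>s. shifted_reaction a (k\<^sup>2) (p s) (q s))"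

text \<open>\<psi> is sought as 1 - \<chi> with \<chi> vanishing at both ends.\<close>

definition step_psi :: "real \<Rightarrow> real \<Rightarrow> real \<Rightarrow> (real \<Rightarrow> real) \<Rightarrow> (real \<Rightarrow> real) \<Rightarrow> real \<Rightarrow> real" where
  "step_psi b k L p q x = 1 - green_op k L (\<lambda>s. k\<^sup>2 - shifted_reaction b (k\<^sup>2) (q s) (p s)) x"

definition admissible_pair :: "real \<Rightarrow> (real \<Rightarrow> real) \<Rightarrow> (real \<Rightarrow> real) \<Rightarrow> bool" where
  "admissible_pair L p q \<longleftrightarrow> continuous_on {0..L} p \<and> continuous_on {0..L} q \<and>
     (\<forall>x\<in>{0..L}. 0 \<le> p x \<and> p x \<le> 1 \<and> 0 \<le> q x \<and> q x \<le> 1)"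

lemma admissible_pairD:
  assumes "admissible_pair L p q"
  shows "continuous_on {0..L} p" "continuous_on {0..L} q"
    and "x \<in> {0..L} \<Longrightarrow> 0 \<le> p x" "x \<in> {0..L} \<Longrightarrow> p x \<le> 1"
    and "x \<in> {0..L} \<Longrightarrow> 0 \<le> q x" "x \<in> {0..L} \<Longrightarrow> q x \<le> 1"
  using assms unfolding admissible_pair_def by auto

lemma has_second_derivative_on_step_phi:
  assumes "admissible_pair L p q" "k \<noteq> 0"
  shows "has_second_derivative_on (step_phi a k L p q)
    (\<lambda>x. k\<^sup>2 * step_phi a k L p q x - shifted_reaction a (k\<^sup>2) (p x) (q x)) {0<..<L}"
  unfolding step_phi_def
  by (intro has_second_derivative_on_green_op continuous_intros admissible_pairD(1,2)[OF assms(1)] assms(2))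

lemma has_second_derivative_on_step_psi:
  assumes "admissible_pair L p q" "k \<noteq> 0"
  shows "has_second_derivative_on (step_psi b k L p q)
    (\<lambda>x. k\<^sup>2 * step_psi b k L p q x - shifted_reaction b (k\<^sup>2) (q x) (p x)) {0<..<L}"
proof -
  have "continuous_on {0..L} (\<lambda>s. k\<^sup>2 - shifted_reaction b (k\<^sup>2) (q s) (p s))"
    by (intro continuous_intros admissible_pairD(1,2)[OF assms(1)])
  from has_second_derivative_on_diff[OF has_second_derivative_on_const
      has_second_derivative_on_green_op[OF this \<open>k \<noteq> 0\<close>]]
  show ?thesis
    unfolding step_psi_def[abs_def] by (rule has_second_derivative_on_cong) (simp add: algebra_simps)
qed

lemma admissible_pair_extend:
  assumes cont: "continuous_on {0..L\<^sub>0} \<phi>" "continuous_on {0..L\<^sub>0} \<psi>" and "0 \<le> L\<^sub>0"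
    and range: "\<And>x. x \<in> {0..L\<^sub>0} \<Longrightarrow> 0 \<le> \<phi> x \<and> \<phi> x \<le> 1 \<and> 0 \<le> \<psi> x \<and> \<psi> x \<le> 1"
  shows "admissible_pair L (\<lambda>x. \<phi> (min x L\<^sub>0)) (\<lambda>x. \<psi> (min x L\<^sub>0))"
proof -
  have min_cont: "continuous_on {0..L} (\<lambda>x. min x L\<^sub>0)" by (intro continuous_intros)
  have min_range: "(\<lambda>x. min x L\<^sub>0) ` {0..L} \<subseteq> {0..L\<^sub>0}" using \<open>0 \<le> L\<^sub>0\<close> by auto
  show ?thesis
    unfolding admissible_pair_def
    using continuous_on_compose2[OF cont(1) min_cont min_range]
      continuous_on_compose2[OF cont(2) min_cont min_range] range min_range
    by auto
qed

lemma barrierI: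
  assumes "continuous_on {0..L} \<phi>" "continuous_on {0..L} \<psi>"
    and "has_second_derivative_on \<phi> \<phi>'' {0<..<L}" "has_second_derivative_on \<psi> \<psi>'' {0<..<L}"
    and "\<And>x. x \<in> {0<..<L} \<Longrightarrow> - \<phi>'' x = \<phi> x * (1 - \<phi> x - a * \<psi> x)"
    and "\<And>x. x \<in> {0<..<L} \<Longrightarrow> - \<psi>'' x = \<psi> x * (1 - b * \<phi> x - \<psi> x)"
    and "\<phi> 0 = 0" "\<phi> L = 0" "\<psi> 0 = 1" "\<psi> L = 1"
    and "\<And>x. x \<in> {0<..<L} \<Longrightarrow> 0 < \<phi> x \<and> \<phi> x < 1 \<and> 0 < \<psi> x \<and> \<psi> x < 1"
  shows "barrier a b L \<phi> \<psi>"
proof -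
  obtain \<phi>' \<psi>' where
    "\<forall>x\<in>{0<..<L}. (\<phi> has_real_derivative \<phi>' x) (at x) \<and> (\<phi>' has_real_derivative \<phi>'' x) (at x)"
    "\<forall>x\<in>{0<..<L}. (\<psi> has_real_derivative \<psi>' x) (at x) \<and> (\<psi>' has_real_derivative \<psi>'' x) (at x)"
    using assms(3,4) unfolding has_second_derivative_on_def by blast
  then show ?thesis
    unfolding barrier_def using assms by (intro conjI exI[of _ \<phi>'] exI[of _ \<psi>'] exI[of _ \<phi>''] exI[of _ \<psi>'']) auto
qed

text \<open>A sub-solution for the order in which \<phi> increases and \<psi> decreases.\<close>

definition competitive_subsolution :: "real \<Rightarrow> real \<Rightarrow> real \<Rightarrow> (real \<Rightarrow> real) \<Rightarrow> (real \<Rightarrow> real) \<Rightarrow> bool" where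
  "competitive_subsolution a b L \<phi> \<psi> \<longleftrightarrow>
     continuous_on {0..L} \<phi> \<and> continuous_on {0..L} \<psi> \<and>
     (\<exists>\<phi>'' \<psi>''. has_second_derivative_on \<phi> \<phi>'' {0<..<L} \<and> has_second_derivative_on \<psi> \<psi>'' {0<..<L} \<and>
        (\<forall>x\<in>{0<..<L}. - \<phi>'' x \<le> \<phi> x * (1 - \<phi> x - a * \<psi> x) \<and> \<psi> x * (1 - b * \<phi> x - \<psi> x) \<le> - \<psi>'' x)) \<and>
     \<phi> 0 = 0 \<and> \<phi> L = 0 \<and> \<psi> 0 = 1 \<and> \<psi> L = 1 \<and>
     (\<forall>x\<in>{0<..<L}. 0 < \<phi> x \<and> \<phi> x < 1 \<and> 0 < \<psi> x \<and> \<psi> x < 1)"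

lemma barrier_imp_competitive_subsolution:
  assumes "barrier a\<^sub>0 b\<^sub>0 L \<phi> \<psi>" "a \<le> a\<^sub>0" "b\<^sub>0 \<le> b"
  shows "competitive_subsolution a b L \<phi> \<psi>"
proof -
  obtain \<phi>' \<psi>' \<phi>'' \<psi>'' where deriv: "\<forall>x\<in>{0<..<L}.
      (\<phi> has_real_derivative \<phi>' x) (at x) \<and> (\<psi> has_real_derivative \<psi>' x) (at x) \<and>
      (\<phi>' has_real_derivative \<phi>'' x) (at x) \<and> (\<psi>' has_real_derivative \<psi>'' x) (at x) \<and>
      - \<phi>'' x = \<phi> x * (1 - \<phi> x - a\<^sub>0 * \<psi> x) \<and> - \<psi>'' x = \<psi> x * (1 - b\<^sub>0 * \<phi> x - \<psi> x)"
    using assms(1) unfolding barrier_def by blast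
  have "has_second_derivative_on \<phi> \<phi>'' {0<..<L}" "has_second_derivative_on \<psi> \<psi>'' {0<..<L}"
    unfolding has_second_derivative_on_def using deriv by blast+
  moreover have "- \<phi>'' x \<le> \<phi> x * (1 - \<phi> x - a * \<psi> x) \<and> \<psi> x * (1 - b * \<phi> x - \<psi> x) \<le> - \<psi>'' x"
    if x: "x \<in> {0<..<L}" for x
  proof -
    have "0 < \<phi> x" "0 < \<psi> x" using assms(1) x unfolding barrier_def by auto
    then have "0 \<le> (a\<^sub>0 - a) * (\<phi> x * \<psi> x)" "0 \<le> (b - b\<^sub>0) * (\<phi> x * \<psi> x)"
      using assms(2,3) by simp_all
    moreover have "\<phi> x * (1 - \<phi> x - a * \<psi> x) = - \<phi>'' x + (a\<^sub>0 - a) * (\<phi> x * \<psi> x)"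
      "\<psi> x * (1 - b * \<phi> x - \<psi> x) = - \<psi>'' x - (b - b\<^sub>0) * (\<phi> x * \<psi> x)"
      using deriv x by (auto simp: algebra_simps)
    ultimately show ?thesis by linarith
  qed
  ultimately show ?thesis
    using assms(1) unfolding barrier_def competitive_subsolution_def by blast
qed

context
  fixes a b k L :: real
  assumes a: "0 \<le> a" and b: "0 < b" and k: "0 < k" "a + 1 \<le> k\<^sup>2" "b + 1 \<le> k\<^sup>2" and L: "0 < L"
begin

lemma shifted_reaction_bounds_admissible:
  assumes "admissible_pair L p q" "s \<in> {0..L}"
  shows "0 \<le> shifted_reaction a (k\<^sup>2) (p s) (q s)" "shifted_reaction a (k\<^sup>2) (p s) (q s) \<le> k\<^sup>2"
    and "0 < p s \<Longrightarrow> 0 < shifted_reaction a (k\<^sup>2) (p s) (q s)"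
    and "b * p s \<le> k\<^sup>2 - shifted_reaction b (k\<^sup>2) (q s) (p s)"
    and "0 \<le> k\<^sup>2 - shifted_reaction b (k\<^sup>2) (q s) (p s)" "k\<^sup>2 - shifted_reaction b (k\<^sup>2) (q s) (p s) \<le> k\<^sup>2"
proof -
  have range: "0 \<le> p s" "p s \<le> 1" "0 \<le> q s" "q s \<le> 1"
    using admissible_pairD(3-6)[OF assms] by auto
  then have "0 \<le> a * q s" "0 \<le> b * p s" using a b by simp_all
  moreover note phi = shifted_reaction_bounds[OF a k(2) range]
    and psi = shifted_reaction_bounds[OF less_imp_le[OF b] k(3) range(3,4,1,2)]
  ultimately show "0 \<le> shifted_reaction a (k\<^sup>2) (p s) (q s)" "shifted_reaction a (k\<^sup>2) (p s) (q s) \<le> k\<^sup>2"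
    "b * p s \<le> k\<^sup>2 - shifted_reaction b (k\<^sup>2) (q s) (p s)"
    "0 \<le> k\<^sup>2 - shifted_reaction b (k\<^sup>2) (q s) (p s)" "k\<^sup>2 - shifted_reaction b (k\<^sup>2) (q s) (p s) \<le> k\<^sup>2"
    by linarith+
  show "0 < p s \<Longrightarrow> 0 < shifted_reaction a (k\<^sup>2) (p s) (q s)" by (rule phi(3))
qed

lemma continuous_on_step_rates:
  assumes "admissible_pair L p q"
  shows "continuous_on {0..L} (\<lambda>s. shifted_reaction a (k\<^sup>2) (p s) (q s))"
    and "continuous_on {0..L} (\<lambda>s. k\<^sup>2 - shifted_reaction b (k\<^sup>2) (q s) (p s))"
  by (intro continuous_intros admissible_pairD(1,2)[OF assms])+

lemma admissible_pair_step:
  assumes "admissible_pair L p q"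
  shows "admissible_pair L (step_phi a k L p q) (step_psi b k L p q)"
proof -
  note rate = shifted_reaction_bounds_admissible[OF assms] and cont = continuous_on_step_rates[OF assms]
  have "0 \<le> step_phi a k L p q x" "step_phi a k L p q x \<le> 1"
    "0 \<le> step_psi b k L p q x" "step_psi b k L p q x \<le> 1" if x: "x \<in> {0..L}" for x
    unfolding step_phi_def step_psi_def
    using green_op_nonneg[OF k(1) cont(1) rate(1) x] green_op_less_one[OF k(1) L cont(1) rate(2) x]
      green_op_less_one[OF k(1) L cont(2) rate(6) x] green_op_nonneg[OF k(1) cont(2) rate(5) x]
    by simp_all
  moreover have "continuous_on {0..L} (step_psi b k L p q)"
    unfolding step_psi_def[abs_def] by (intro continuous_intros continuous_on_green_op cont)
  ultimately show ?thesis
    unfolding admissible_pair_def using cont by (simp add: step_phi_def continuous_on_green_op)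
qed

lemma step_mono:
  assumes pq: "admissible_pair L p q" and pq': "admissible_pair L p' q'"
    and le: "\<And>s. s \<in> {0..L} \<Longrightarrow> p s \<le> p' s \<and> q' s \<le> q s" and x: "x \<in> {0..L}"
  shows "step_phi a k L p q x \<le> step_phi a k L p' q' x" "step_psi b k L p' q' x \<le> step_psi b k L p q x"
proof -
  have "shifted_reaction a (k\<^sup>2) (p s) (q s) \<le> shifted_reaction a (k\<^sup>2) (p' s) (q' s)"
    "shifted_reaction b (k\<^sup>2) (q' s) (p' s) \<le> shifted_reaction b (k\<^sup>2) (q s) (p s)" if "s \<in> {0..L}" for s
    using pq pq' le[OF that] that a b k
    by (auto simp: admissible_pair_def intro!: shifted_reaction_mono)
  then show "step_phi a k L p q x \<le> step_phi a k L p' q' x" "step_psi b k L p' q' x \<le> step_psi b k L p q x"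
    unfolding step_phi_def step_psi_def using x
    by (auto intro!: green_op_mono k continuous_intros admissible_pairD(1,2)[OF pq] admissible_pairD(1,2)[OF pq'])
qed

lemma barrier_of_fixed_point:
  assumes pq: "admissible_pair L p q"
    and fixed: "\<And>x. x \<in> {0..L} \<Longrightarrow> p x = step_phi a k L p q x \<and> q x = step_psi b k L p q x"
    and s0: "s0 \<in> {0<..<L}" "0 < p s0"
  shows "barrier a b L (step_phi a k L p q) (step_psi b k L p q)"
proof (rule barrierI)
  define \<phi> \<psi> where "\<phi> = step_phi a k L p q" and "\<psi> = step_psi b k L p q"
  note rate = shifted_reaction_bounds_admissible[OF pq] and cont = continuous_on_step_rates[OF pq]
  show "continuous_on {0..L} \<phi>" "continuous_on {0..L} \<psi>"
    using admissible_pairD(1,2)[OF admissible_pair_step[OF pq]] unfolding \<phi>_def \<psi>_def .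
  show "has_second_derivative_on \<phi> (\<lambda>x. k\<^sup>2 * \<phi> x - shifted_reaction a (k\<^sup>2) (p x) (q x)) {0<..<L}"
    "has_second_derivative_on \<psi> (\<lambda>x. k\<^sup>2 * \<psi> x - shifted_reaction b (k\<^sup>2) (q x) (p x)) {0<..<L}"
    unfolding \<phi>_def \<psi>_def using k(1)
    by (auto intro!: has_second_derivative_on_step_phi has_second_derivative_on_step_psi pq)
  show "- (k\<^sup>2 * \<phi> x - shifted_reaction a (k\<^sup>2) (p x) (q x)) = \<phi> x * (1 - \<phi> x - a * \<psi> x)"
    "- (k\<^sup>2 * \<psi> x - shifted_reaction b (k\<^sup>2) (q x) (p x)) = \<psi> x * (1 - b * \<phi> x - \<psi> x)"
    if "x \<in> {0<..<L}" for x
    using fixed[of x] that unfolding \<phi>_def \<psi>_def shifted_reaction_def by (auto simp: algebra_simps)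
  show "\<phi> 0 = 0" "\<phi> L = 0" "\<psi> 0 = 1" "\<psi> L = 1"
    unfolding \<phi>_def \<psi>_def step_phi_def step_psi_def by simp_all
  show "0 < \<phi> x \<and> \<phi> x < 1 \<and> 0 < \<psi> x \<and> \<psi> x < 1" if x: "x \<in> {0<..<L}" for x
  proof -
    have x': "x \<in> {0..L}" and s0': "s0 \<in> {0..L}" using x s0(1) by auto
    have "0 < b * p s0" using b s0(2) by simp
    then have "0 < k\<^sup>2 - shifted_reaction b (k\<^sup>2) (q s0) (p s0)" using rate(4)[OF s0'] by linarith
    then have "0 < green_op k L (\<lambda>s. k\<^sup>2 - shifted_reaction b (k\<^sup>2) (q s) (p s)) x"
      using green_op_pos[OF k(1) cont(2) rate(5) s0(1) _ x] by simp
    moreover have "0 < green_op k L (\<lambda>s. shifted_reaction a (k\<^sup>2) (p s) (q s)) x"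
      by (rule green_op_pos[OF k(1) cont(1) rate(1) s0(1) rate(3)[OF s0' s0(2)] x])
    moreover note green_op_less_one[OF k(1) L cont(1) rate(2) x'] green_op_less_one[OF k(1) L cont(2) rate(6) x']
    ultimately show ?thesis unfolding \<phi>_def \<psi>_def step_phi_def step_psi_def by simp
  qed
qed

lemma step_tendsto:
  assumes adm: "\<And>n. admissible_pair L (P n) (Q n)"
    and P: "\<And>x. x \<in> {0..L} \<Longrightarrow> (\<lambda>n. P n x) \<longlonglongrightarrow> p x"
    and Q: "\<And>x. x \<in> {0..L} \<Longrightarrow> (\<lambda>n. Q n x) \<longlonglongrightarrow> q x"
  shows "continuous_on {0..L} (step_phi a k L p q)" "continuous_on {0..L} (step_psi b k L p q)"
    and "\<And>x. x \<in> {0..L} \<Longrightarrow> (\<lambda>n. step_phi a k L (P n) (Q n) x) \<longlonglongrightarrow> step_phi a k L p q x"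
    and "\<And>x. x \<in> {0..L} \<Longrightarrow> (\<lambda>n. step_psi b k L (P n) (Q n) x) \<longlonglongrightarrow> step_psi b k L p q x"
proof -
  have lim: "(\<lambda>n. shifted_reaction c K (P n s) (Q n s)) \<longlonglongrightarrow> shifted_reaction c K (p s) (q s)"
    "(\<lambda>n. shifted_reaction c K (Q n s) (P n s)) \<longlonglongrightarrow> shifted_reaction c K (q s) (p s)"
    if "s \<in> {0..L}" for c K s
    using P[OF that] Q[OF that] unfolding shifted_reaction_def by (auto intro!: tendsto_intros)
  note cont = continuous_on_step_rates[OF adm]
  have bound: "\<bar>shifted_reaction a (k\<^sup>2) (P n s) (Q n s)\<bar> \<le> k\<^sup>2"
    "\<bar>k\<^sup>2 - shifted_reaction b (k\<^sup>2) (Q n s) (P n s)\<bar> \<le> k\<^sup>2" if "s \<in> {0..L}" for n s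
    using shifted_reaction_bounds_admissible[OF adm that] by simp_all
  have lim_psi: "(\<lambda>n. k\<^sup>2 - shifted_reaction b (k\<^sup>2) (Q n s) (P n s))
      \<longlonglongrightarrow> k\<^sup>2 - shifted_reaction b (k\<^sup>2) (q s) (p s)" if "s \<in> {0..L}" for s
    using lim(2)[OF that] by (intro tendsto_intros)
  note phi = green_op_tendsto[where g="\<lambda>n s. shifted_reaction a (k\<^sup>2) (P n s) (Q n s)"
      and g_lim="\<lambda>s. shifted_reaction a (k\<^sup>2) (p s) (q s)", OF cont(1) bound(1) lim(1)]
  note psi = green_op_tendsto[where g="\<lambda>n s. k\<^sup>2 - shifted_reaction b (k\<^sup>2) (Q n s) (P n s)"
      and g_lim="\<lambda>s. k\<^sup>2 - shifted_reaction b (k\<^sup>2) (q s) (p s)", OF cont(2) bound(2) lim_psi]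
  show "continuous_on {0..L} (step_phi a k L p q)"
    "\<And>x. x \<in> {0..L} \<Longrightarrow> (\<lambda>n. step_phi a k L (P n) (Q n) x) \<longlonglongrightarrow> step_phi a k L p q x"
    unfolding step_phi_def using phi by auto
  show "continuous_on {0..L} (step_psi b k L p q)"
    "\<And>x. x \<in> {0..L} \<Longrightarrow> (\<lambda>n. step_psi b k L (P n) (Q n) x) \<longlonglongrightarrow> step_psi b k L p q x"
    unfolding step_psi_def[abs_def] using psi by (auto intro!: continuous_intros tendsto_intros)
qed

lemma fixed_point_of_monotone_iterates:
  assumes adm: "\<And>n. admissible_pair L (P n) (Q n)"
    and P_Suc: "\<And>n. P (Suc n) = step_phi a k L (P n) (Q n)"
    and Q_Suc: "\<And>n. Q (Suc n) = step_psi b k L (P n) (Q n)"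
    and inc: "\<And>x. x \<in> {0..L} \<Longrightarrow> incseq (\<lambda>n. P n x)"
    and dec: "\<And>x. x \<in> {0..L} \<Longrightarrow> decseq (\<lambda>n. Q n x)"
  obtains p q where "admissible_pair L p q" "\<And>x. x \<in> {0..L} \<Longrightarrow> P 0 x \<le> p x"
    "\<And>x. x \<in> {0..L} \<Longrightarrow> p x = step_phi a k L p q x \<and> q x = step_psi b k L p q x"
proof -
  have bounded: "0 \<le> P n x" "P n x \<le> 1" "0 \<le> Q n x" "Q n x \<le> 1" if "x \<in> {0..L}" for n x
    using admissible_pairD(3-6)[OF adm that] by auto
  define p q where "p x = (SUP n. P n x)" and "q x = (INF n. Q n x)" for x
  have P_lim: "(\<lambda>n. P n x) \<longlonglongrightarrow> p x" if "x \<in> {0..L}" for x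
    unfolding p_def using inc[OF that] bounded[OF that] by (intro LIMSEQ_incseq_SUP bdd_aboveI2) auto
  have Q_lim: "(\<lambda>n. Q n x) \<longlonglongrightarrow> q x" if "x \<in> {0..L}" for x
    unfolding q_def using dec[OF that] bounded[OF that] by (intro LIMSEQ_decseq_INF bdd_belowI2) auto
  have lim: "continuous_on {0..L} (step_phi a k L p q)" "continuous_on {0..L} (step_psi b k L p q)"
    "\<And>x. x \<in> {0..L} \<Longrightarrow> (\<lambda>n. P (Suc n) x) \<longlonglongrightarrow> step_phi a k L p q x"
    "\<And>x. x \<in> {0..L} \<Longrightarrow> (\<lambda>n. Q (Suc n) x) \<longlonglongrightarrow> step_psi b k L p q x"
    unfolding P_Suc Q_Suc using step_tendsto[OF adm P_lim Q_lim] by blast+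
  have fixed: "p x = step_phi a k L p q x \<and> q x = step_psi b k L p q x" if "x \<in> {0..L}" for x
    using LIMSEQ_unique[OF LIMSEQ_Suc[OF P_lim[OF that]] lim(3)[OF that]]
      LIMSEQ_unique[OF LIMSEQ_Suc[OF Q_lim[OF that]] lim(4)[OF that]] by blast
  have "continuous_on {0..L} p" "continuous_on {0..L} q"
    using continuous_on_eq[OF lim(1)] continuous_on_eq[OF lim(2)] fixed by auto
  moreover have "0 \<le> p x \<and> p x \<le> 1 \<and> 0 \<le> q x \<and> q x \<le> 1" if "x \<in> {0..L}" for x
    using bounded[OF that] P_lim[OF that] Q_lim[OF that]
    by (meson LIMSEQ_le_const LIMSEQ_le_const2)
  ultimately have "admissible_pair L p q"
    unfolding admissible_pair_def by blast
  moreover have "P 0 x \<le> p x" if "x \<in> {0..L}" for x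
    using incseq_le[OF inc P_lim] that by blast
  ultimately show ?thesis using that fixed by blast
qed

lemma monotone_iteration_fixed_point:
  assumes pq0: "admissible_pair L p0 q0"
    and start: "\<And>x. x \<in> {0..L} \<Longrightarrow> p0 x \<le> step_phi a k L p0 q0 x \<and> step_psi b k L p0 q0 x \<le> q0 x"
  obtains p q where "admissible_pair L p q" "\<And>x. x \<in> {0..L} \<Longrightarrow> p0 x \<le> p x"
    "\<And>x. x \<in> {0..L} \<Longrightarrow> p x = step_phi a k L p q x \<and> q x = step_psi b k L p q x"
proof -
  define T where "T = (\<lambda>(p, q). (step_phi a k L p q, step_psi b k L p q))"
  define P where "P n = fst ((T ^^ n) (p0, q0))" for n
  define Q where "Q n = snd ((T ^^ n) (p0, q0))" for n
  have P_Suc: "P (Suc n) = step_phi a k L (P n) (Q n)" and Q_Suc: "Q (Suc n) = step_psi b k L (P n) (Q n)" for n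
    by (simp_all add: P_def Q_def T_def split_beta)
  have adm: "admissible_pair L (P n) (Q n)" for n
    by (induction n) (simp_all add: P_Suc Q_Suc admissible_pair_step, simp add: P_def Q_def pq0)
  have mono: "P n x \<le> P (Suc n) x \<and> Q (Suc n) x \<le> Q n x" if "x \<in> {0..L}" for n x
    using that
  proof (induction n arbitrary: x)
    case 0
    then show ?case using start by (simp add: P_def Q_def T_def)
  next
    case (Suc n)
    then have "step_phi a k L (P n) (Q n) x \<le> step_phi a k L (P (Suc n)) (Q (Suc n)) x
        \<and> step_psi b k L (P (Suc n)) (Q (Suc n)) x \<le> step_psi b k L (P n) (Q n) x"
      using step_mono[OF adm adm] by blast
    then show ?case by (simp only: P_Suc Q_Suc)
  qed
  have "incseq (\<lambda>n. P n x)" "decseq (\<lambda>n. Q n x)" if "x \<in> {0..L}" for x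
    using mono[OF that] by (auto intro: incseq_SucI decseq_SucI)
  then obtain p q where "admissible_pair L p q" "\<And>x. x \<in> {0..L} \<Longrightarrow> P 0 x \<le> p x"
    "\<And>x. x \<in> {0..L} \<Longrightarrow> p x = step_phi a k L p q x \<and> q x = step_psi b k L p q x"
    using fixed_point_of_monotone_iterates[where P=P and Q=Q, OF adm P_Suc Q_Suc] by blast
  moreover have "P 0 = p0" by (simp add: P_def)
  ultimately show ?thesis using that by blast
qed

lemma step_phi_above:
  assumes adm: "admissible_pair L p q" and "L\<^sub>0 \<le> L"
    and deriv: "has_second_derivative_on p p'' {0<..<L\<^sub>0}"
    and sub: "\<And>x. x \<in> {0<..<L\<^sub>0} \<Longrightarrow> - p'' x \<le> p x * (1 - p x - a * q x)"
    and "p 0 = 0" "p L\<^sub>0 = 0" and x: "x \<in> {0..L\<^sub>0}"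
  shows "p x \<le> step_phi a k L p q x"
proof -
  define sp where "sp = step_phi a k L p q"
  note adm_step = admissible_pairD[OF admissible_pair_step[OF adm], folded sp_def]
  have "0 \<le> sp x - p x"
  proof (rule minimum_principle[where w="\<lambda>x. sp x - p x" and K="k\<^sup>2" and \<alpha>=0 and \<beta>=L\<^sub>0])
    show "continuous_on {0..L\<^sub>0} (\<lambda>x. sp x - p x)"
      using adm_step(1) admissible_pairD(1)[OF adm] \<open>L\<^sub>0 \<le> L\<close>
      by (auto intro!: continuous_intros elim: continuous_on_subset)
    show "has_second_derivative_on (\<lambda>x. sp x - p x)
        (\<lambda>x. (k\<^sup>2 * sp x - shifted_reaction a (k\<^sup>2) (p x) (q x)) - p'' x) {0<..<L\<^sub>0}"
      using has_second_derivative_on_step_phi[OF adm, of k a, folded sp_def] k(1) \<open>L\<^sub>0 \<le> L\<close>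
      by (intro has_second_derivative_on_diff deriv) (auto elim: has_second_derivative_on_subset)
    show "(k\<^sup>2 * sp y - shifted_reaction a (k\<^sup>2) (p y) (q y)) - p'' y \<le> k\<^sup>2 * (sp y - p y)"
      if "y \<in> {0<..<L\<^sub>0}" for y
      using sub[OF that] by (simp add: shifted_reaction_def algebra_simps)
  qed (use x k(1) adm_step(3) assms(5,6) \<open>L\<^sub>0 \<le> L\<close> in auto)
  then show ?thesis by (simp add: sp_def)
qed

lemma step_psi_below:
  assumes adm: "admissible_pair L p q" and "L\<^sub>0 \<le> L"
    and deriv: "has_second_derivative_on q q'' {0<..<L\<^sub>0}"
    and super: "\<And>x. x \<in> {0<..<L\<^sub>0} \<Longrightarrow> q x * (1 - b * p x - q x) \<le> - q'' x"
    and "q 0 = 1" "q L\<^sub>0 = 1" and x: "x \<in> {0..L\<^sub>0}"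
  shows "step_psi b k L p q x \<le> q x"
proof -
  define sq where "sq = step_psi b k L p q"
  note adm_step = admissible_pairD[OF admissible_pair_step[OF adm], folded sq_def]
  have "0 \<le> q x - sq x"
  proof (rule minimum_principle[where w="\<lambda>x. q x - sq x" and K="k\<^sup>2" and \<alpha>=0 and \<beta>=L\<^sub>0])
    show "continuous_on {0..L\<^sub>0} (\<lambda>x. q x - sq x)"
      using adm_step(2) admissible_pairD(2)[OF adm] \<open>L\<^sub>0 \<le> L\<close>
      by (auto intro!: continuous_intros elim: continuous_on_subset)
    show "has_second_derivative_on (\<lambda>x. q x - sq x)
        (\<lambda>x. q'' x - (k\<^sup>2 * sq x - shifted_reaction b (k\<^sup>2) (q x) (p x))) {0<..<L\<^sub>0}"
      using has_second_derivative_on_step_psi[OF adm, of k b, folded sq_def] k(1) \<open>L\<^sub>0 \<le> L\<close>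
      by (intro has_second_derivative_on_diff deriv) (auto elim: has_second_derivative_on_subset)
    show "q'' y - (k\<^sup>2 * sq y - shifted_reaction b (k\<^sup>2) (q y) (p y)) \<le> k\<^sup>2 * (q y - sq y)"
      if "y \<in> {0<..<L\<^sub>0}" for y
      using super[OF that] by (simp add: shifted_reaction_def algebra_simps)
  qed (use x k(1) adm_step(6) assms(5,6) \<open>L\<^sub>0 \<le> L\<close> in auto)
  then show ?thesis by (simp add: sq_def)
qed

lemma competitive_subsolution_le_step:
  assumes sub: "competitive_subsolution a b L\<^sub>0 \<phi> \<psi>" and "0 < L\<^sub>0" "L\<^sub>0 \<le> L"
    and p\<^sub>0_def: "p\<^sub>0 = (\<lambda>x. \<phi> (min x L\<^sub>0))" and q\<^sub>0_def: "q\<^sub>0 = (\<lambda>x. \<psi> (min x L\<^sub>0))"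
  shows "admissible_pair L p\<^sub>0 q\<^sub>0"
    and "\<And>x. x \<in> {0..L} \<Longrightarrow> p\<^sub>0 x \<le> step_phi a k L p\<^sub>0 q\<^sub>0 x \<and> step_psi b k L p\<^sub>0 q\<^sub>0 x \<le> q\<^sub>0 x"
proof -
  obtain \<phi>'' \<psi>'' where
    cont: "continuous_on {0..L\<^sub>0} \<phi>" "continuous_on {0..L\<^sub>0} \<psi>" and
    deriv: "has_second_derivative_on \<phi> \<phi>'' {0<..<L\<^sub>0}" "has_second_derivative_on \<psi> \<psi>'' {0<..<L\<^sub>0}" and
    ineq: "\<And>x. x \<in> {0<..<L\<^sub>0} \<Longrightarrow> - \<phi>'' x \<le> \<phi> x * (1 - \<phi> x - a * \<psi> x) \<and> \<psi> x * (1 - b * \<phi> x - \<psi> x) \<le> - \<psi>'' x" and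
    bdry: "\<phi> 0 = 0" "\<phi> L\<^sub>0 = 0" "\<psi> 0 = 1" "\<psi> L\<^sub>0 = 1" and
    range: "\<And>x. x \<in> {0<..<L\<^sub>0} \<Longrightarrow> 0 < \<phi> x \<and> \<phi> x < 1 \<and> 0 < \<psi> x \<and> \<psi> x < 1"
    using sub unfolding competitive_subsolution_def by metis
  have range0: "0 \<le> \<phi> x \<and> \<phi> x \<le> 1 \<and> 0 \<le> \<psi> x \<and> \<psi> x \<le> 1" if "x \<in> {0..L\<^sub>0}" for x
    using range[of x] bdry that by (cases "x = 0 \<or> x = L\<^sub>0") auto
  show adm: "admissible_pair L p\<^sub>0 q\<^sub>0"
    unfolding p\<^sub>0_def q\<^sub>0_def using admissible_pair_extend[OF cont _ range0] \<open>0 < L\<^sub>0\<close> by simp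
  have on_L0: "p\<^sub>0 x = \<phi> x" "q\<^sub>0 x = \<psi> x" if "x \<le> L\<^sub>0" for x
    using that by (simp_all add: p\<^sub>0_def q\<^sub>0_def)
  have "has_second_derivative_on p\<^sub>0 \<phi>'' {0<..<L\<^sub>0}" "has_second_derivative_on q\<^sub>0 \<psi>'' {0<..<L\<^sub>0}"
    using deriv on_L0 by (auto intro: has_second_derivative_on_transform)
  note above = step_phi_above[OF adm \<open>L\<^sub>0 \<le> L\<close> this(1)] and below = step_psi_below[OF adm \<open>L\<^sub>0 \<le> L\<close> this(2)]
  have "p\<^sub>0 x \<le> step_phi a k L p\<^sub>0 q\<^sub>0 x" "step_psi b k L p\<^sub>0 q\<^sub>0 x \<le> q\<^sub>0 x" if "x \<in> {0..L\<^sub>0}" for x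
    using above[OF _ _ _ that] below[OF _ _ _ that] ineq on_L0 bdry \<open>0 < L\<^sub>0\<close> by auto
  moreover have "p\<^sub>0 x = 0" "q\<^sub>0 x = 1" if "L\<^sub>0 < x" for x
    using that bdry by (simp_all add: p\<^sub>0_def q\<^sub>0_def)
  ultimately show "p\<^sub>0 x \<le> step_phi a k L p\<^sub>0 q\<^sub>0 x \<and> step_psi b k L p\<^sub>0 q\<^sub>0 x \<le> q\<^sub>0 x" if "x \<in> {0..L}" for x
    using that admissible_pairD(3,6)[OF admissible_pair_step[OF adm]] by (cases "x \<le> L\<^sub>0") force+
qed

end

lemma barrier_exists_if_competitive_subsolution:
  assumes a: "0 \<le> a" and b: "0 < b" and sub: "competitive_subsolution a b L\<^sub>0 \<phi> \<psi>"
    and L\<^sub>0: "0 < L\<^sub>0" "L\<^sub>0 \<le> L"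
  shows "barrier_exists a b L"
proof -
  define k where "k = a + b + 2"
  have "1 \<le> k" using a b by (simp add: k_def)
  then have "k \<le> k\<^sup>2" by (simp add: power2_eq_square)
  then have k: "0 < k" "a + 1 \<le> k\<^sup>2" "b + 1 \<le> k\<^sup>2" using a b by (auto simp: k_def)
  have L: "0 < L" using L\<^sub>0 by simp
  define p\<^sub>0 q\<^sub>0 where "p\<^sub>0 = (\<lambda>x. \<phi> (min x L\<^sub>0))" and "q\<^sub>0 = (\<lambda>x. \<psi> (min x L\<^sub>0))"
  note start = competitive_subsolution_le_step[OF a b k L sub L\<^sub>0 p\<^sub>0_def q\<^sub>0_def]
  obtain p q where pq: "admissible_pair L p q" and above: "\<And>x. x \<in> {0..L} \<Longrightarrow> p\<^sub>0 x \<le> p x"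
    and fixed: "\<And>x. x \<in> {0..L} \<Longrightarrow> p x = step_phi a k L p q x \<and> q x = step_psi b k L p q x"
    using monotone_iteration_fixed_point[OF a b k L start] by blast
  have "0 < \<phi> (L\<^sub>0 / 2)" using sub L\<^sub>0 unfolding competitive_subsolution_def by auto
  then have "0 < p (L\<^sub>0 / 2)" using above[of "L\<^sub>0 / 2"] L\<^sub>0 by (simp add: p\<^sub>0_def)
  then have "barrier a b L (step_phi a k L p q) (step_psi b k L p q)"
    using barrier_of_fixed_point[OF a b k L pq fixed, of "L\<^sub>0 / 2"] L\<^sub>0 by simp
  then show ?thesis unfolding barrier_exists_def by blast
qed

theorem proposition1:
  fixes a0 b0 L0 :: real
  assumes "a0 > 0" and "b0 > max a0 1" and "L0 > 0"
    and "barrier_exists a0 b0 L0"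
  shows "(\<forall>L\<ge>L0. barrier_exists a0 b0 L)
       \<and> (\<forall>b\<ge>b0. barrier_exists a0 b L0)
       \<and> (\<forall>a. 0 < a \<and> a \<le> a0 \<longrightarrow> barrier_exists a b0 L0)"
proof -
  obtain \<phi> \<psi> where barrier: "barrier a0 b0 L0 \<phi> \<psi>"
    using assms(4) unfolding barrier_exists_def by blast
  have "barrier_exists a b L" if "0 < a" "a \<le> a0" "b0 \<le> b" "L0 \<le> L" for a b L
    using barrier_exists_if_competitive_subsolution[OF _ _ barrier_imp_competitive_subsolution[OF barrier]]
      assms(2,3) that by auto
  then show ?thesis using assms(1) by auto
qed

end
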